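(* Every polite basis of $\mathscr O=\mathscr O(N)$ is biperfect.
   Context: Setting. Let $k$ be a field of characteristic $0$ and $G$ a split connected reductive group over $k$, with Borel $B$, maximal torus $T\subset B$, simple roots $\{\alpha_i\}_{i\in I}$, root lattice $Q$, $Q_\pm$ the submonoid generated by positive/negative roots. For $\lambda=\sum c_i\alpha_i$, $\operatorname{ht}\lambda=\sum c_i$. Let $N$ be the unipotent radical of $B$, $\mathfrak n$ its Lie algebra, $e_i$ a root vector of weight $\alpha_i$, $e_i^{(n)}=e_i^n/n!$. Let $\mathscr O=\mathscr O(N)=\bigoplus_{\lambda\in Q_-}\mathscr O_\lambda$ (grading from conjugation by $T$), coproduct $\Delta$. $N$ and $U(\mathfrak n)$ act on both sides: $(n\cdot f)(m)=f(mn)$, $(f\cdot n)(m)=f(nm)$; $\langle x,f\rangle=(x\cdot f)(1_N)$ identifies $\mathscr O$ with the graded dual bialgebra of $U(\mathfrak n)$. Let $\zeta_i\in\mathscr O_{-\alpha_i}$ with $\langle e_i,\zeta_i\rangle=1$. The involution $*$ of $\mathscr O$ is defined by $f^*(n)=(-1)^{\operatorname{ht}\lambda}f(n^{-1})$ for $f\in\mathscr O_\lambda$, extended linearly. Polite bases. For $\theta\in Q_{\mathbb R}^*$, $J_\theta(\lambda)=-(\operatorname{ht}\lambda,\theta(\lambda))$, $\Gamma_\theta=J_\theta(Q_-)$, $\mathscr O^\gamma=\bigoplus_{J_\theta(\lambda)=\gamma}\mathscr O_\lambda$; for $\Gamma_\theta$-homogeneous $a$, $L_\theta(a)$ is the set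 of $\beta$ with nonzero component of $\Delta(a)$ in $\mathscr O^\beta\otimes\mathscr O^{|a|-\beta}$, $R_\theta(a)=|a|-L_\theta(a)$. $\Pi'=\{(r,d): d<0\text{ or }(d=0,r\ge0)\}$, $\Pi''=\{(r,d): d>0\text{ or }(d=0,r\ge0)\}$, $\alpha\le'\beta$ iff $\alpha+\Pi'\subset\beta+\Pi'$, $\alpha\le''\beta$ iff $\alpha+\Pi''\subset\beta+\Pi''$. ${}^\theta F'_\alpha\mathscr O$ (resp. ${}^\theta F''_\beta\mathscr O$) is the span of homogeneous $a$ with $L_\theta(a)\subset\alpha+\Pi'$ (resp. $R_\theta(a)\subset\beta+\Pi''$), associated graded $\mathrm{gr}'$, $\mathrm{gr}''$. $\mathscr O_{[\le0]}={}^\theta F'_0\mathscr O$, $\mathscr O_{[>0]}=\bigoplus_\gamma({}^\theta F'_\gamma\mathscr O\cap\mathscr O^\gamma)$, $\mathscr O_{[\ge0]}={}^\theta F''_0\mathscr O$, $\mathscr O_{[<0]}=\bigoplus_\gamma({}^\theta F''_\gamma\mathscr O\cap\mathscr O^\gamma)$. The algebra isomorphisms $\overline\Delta':\mathrm{gr}'\mathscr O\to\mathscr O_{[>0]}\otimes\mathscr O_{[\le0]}$ and $\overline\Delta'':\mathrm{gr}''\mathscr O\to\mathscr O_{[\ge0]}\otimes\mathscr O_{[<0]}$ send the class of homogeneous $a$ in $\mathrm{gr}'_\alpha$ (resp. $\mathrm{gr}''_\beta$) to the component of $\Delta(a)$ in $\mathscr O^\alpha\otimes\mathscr O^{|a|-\alpha}$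 (resp. $\mathscr O^{|a|-\beta}\otimes\mathscr O^\beta$). A basis $\mathbf B$ of $\mathscr O$ is polite if (i) it consists of weight vectors; (ii) $\zeta_i^n\in\mathbf B$ for all $i,n$; (iii) for every $\theta,\gamma$, ${}^\theta F'_\gamma\mathscr O$ is spanned by $\mathbf B\cap{}^\theta F'_\gamma\mathscr O$ and $\overline\Delta'$ maps the induced basis of $\mathrm{gr}'\mathscr O$ onto the tensor product of the induced bases of $\mathscr O_{[>0]}$, $\mathscr O_{[\le0]}$; (iv) the analogous condition for $F''$ and $\overline\Delta''$. Perfect bases. For $i\in I$ and $f\in\mathscr O$, $\ell_i(f)$ is the smallest $n\ge0$ with $e_i^{n+1}\cdot f=0$. A basis $\mathbf B$ of weight vectors is perfect if for each $(i,n)\in I\times\mathbb N$, $b\mapsto e_i^{(n)}\cdot b$ defines an injective map $\{b\in\mathbf B:\ell_i(b)=n\}\to\{b\in\mathbf B: e_i\cdot b=0\}$. $\mathbf B$ is biperfect if both $\mathbf B$ and $\{b^*: b\in\mathbf B\}$ are perfect. *)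

theory Defs
  imports Complex_Main
begin

text \<open>
  U(n) is the free algebra on the letters e_i (i in I)
  modulo the Serre relations; a word w :: 'i list stands for the monomial e_{w_1}...e_{w_n}.
  An element f of O = O(N) (graded dual of U(n)) is represented by its values f w = <w, f>
  on words; these are exactly the finitely supported functions on words in I that vanish on
  the Serre ideal.
\<close>

definition cartan_finite_type :: "('i \<Rightarrow> 'i \<Rightarrow> int) \<Rightarrow> 'i set \<Rightarrow> bool" where
  "cartan_finite_type A I \<longleftrightarrow>
     (\<forall>i\<in>I. A i i = 2) \<and>
     (\<forall>i\<in>I. \<forall>j\<in>I. i \<noteq> j \<longrightarrow> A i j \<le> 0) \<and>
     (\<forall>i\<in>I. \<forall>j\<in>I. A i j = 0 \<longleftrightarrow> A j i = 0) \<and>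
     (\<exists>d :: 'i \<Rightarrow> real. (\<forall>i\<in>I. d i > 0) \<and>
        (\<forall>i\<in>I. \<forall>j\<in>I. d i * of_int (A i j) = d j * of_int (A j i)) \<and>
        (\<forall>x :: 'i \<Rightarrow> real. (\<exists>i\<in>I. x i \<noteq> 0) \<longrightarrow>
            (\<Sum>i\<in>I. \<Sum>j\<in>I. x i * d i * of_int (A i j) * x j) > 0))"

definition Ocar :: "('i \<Rightarrow> 'i \<Rightarrow> int) \<Rightarrow> 'i set \<Rightarrow> ('i list \<Rightarrow> 'k::field) set" where
  "Ocar A I = {f. (\<forall>w. f w \<noteq> 0 \<longrightarrow> set w \<subseteq> I) \<and> finite {w. f w \<noteq> 0} \<and>
     (\<forall>u v i j. i \<in> I \<longrightarrow> j \<in> I \<longrightarrow> i \<noteq> j \<longrightarrow>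
        (\<Sum>k\<le>nat (1 - A i j). (-1) ^ k * of_nat (nat (1 - A i j) choose k) *
            f (u @ replicate k i @ [j] @ replicate (nat (1 - A i j) - k) i @ v)) = 0)}"

definition lin_span :: "('a \<Rightarrow> 'k::field) set \<Rightarrow> ('a \<Rightarrow> 'k) set" where
  "lin_span S = {f. \<exists>F c. finite F \<and> F \<subseteq> S \<and> f = (\<lambda>w. \<Sum>s\<in>F. c s * s w)}"

definition lin_indep :: "('a \<Rightarrow> 'k::field) set \<Rightarrow> bool" where
  "lin_indep S \<longleftrightarrow> (\<forall>F c. finite F \<longrightarrow> F \<subseteq> S \<longrightarrow> (\<lambda>w. \<Sum>s\<in>F. c s * s w) = (\<lambda>w. 0)
        \<longrightarrow> (\<forall>s\<in>F. c s = 0))"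

definition is_basis_of :: "('a \<Rightarrow> 'k::field) set \<Rightarrow> ('a \<Rightarrow> 'k) set \<Rightarrow> bool" where
  "is_basis_of V B \<longleftrightarrow> B \<subseteq> V \<and> lin_indep B \<and> lin_span B = V"

text \<open>Weights: the word w has Q-weight -wt w, so f is in O_lambda iff all words in its support
  have wt = -lambda.\<close>
definition wt :: "'i list \<Rightarrow> 'i \<Rightarrow> nat" where
  "wt w = (\<lambda>i. length (filter ((=) i) w))"

definition weight_vector :: "('i list \<Rightarrow> 'k::field) \<Rightarrow> bool" where
  "weight_vector f \<longleftrightarrow> (\<exists>\<mu>. \<forall>w. f w \<noteq> 0 \<longrightarrow> wt w = \<mu>)"

text \<open>Shuffle product of O (dual to the coproduct of U(n), e_i primitive), unit, powers.\<close>
definition omult :: "('i list \<Rightarrow> 'k::field) \<Rightarrow> ('i list \<Rightarrow> 'k) \<Rightarrow> 'i list \<Rightarrow> 'k" where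
  "omult f g = (\<lambda>w. \<Sum>S\<in>Pow {0..<length w}. f (nths w S) * g (nths w ({0..<length w} - S)))"

definition oone :: "'i list \<Rightarrow> 'k::field" where
  "oone = (\<lambda>w. if w = [] then 1 else 0)"

definition opow :: "('i list \<Rightarrow> 'k::field) \<Rightarrow> nat \<Rightarrow> 'i list \<Rightarrow> 'k" where
  "opow f n = (omult f ^^ n) oone"

definition zeta :: "'i \<Rightarrow> 'i list \<Rightarrow> 'k::field" where
  "zeta i = (\<lambda>w. if w = [i] then 1 else 0)"

text \<open>Left action of e_i: <y, e_i . f> = <y e_i, f>; divided powers; l_i.\<close>
definition eact :: "'i \<Rightarrow> ('i list \<Rightarrow> 'k::field) \<Rightarrow> 'i list \<Rightarrow> 'k" where
  "eact i f = (\<lambda>w. f (w @ [i]))"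

definition edp :: "'i \<Rightarrow> nat \<Rightarrow> ('i list \<Rightarrow> 'k::field) \<Rightarrow> 'i list \<Rightarrow> 'k" where
  "edp i n f = (\<lambda>w. ((eact i ^^ n) f) w / of_nat (fact n))"

definition ell :: "'i \<Rightarrow> ('i list \<Rightarrow> 'k::field) \<Rightarrow> nat" where
  "ell i f = (LEAST n. (eact i ^^ (Suc n)) f = (\<lambda>w. 0))"

text \<open>The involution *: f*(n) = (-1)^{ht lambda} f(n^{-1}).  Dually the antipode of U(n) sends
  a word of length m to (-1)^m times the reversed word, and (-1)^{ht lambda} = (-1)^m on
  O_lambda, so f* w = f (rev w).\<close>
definition ostar :: "('i list \<Rightarrow> 'k::field) \<Rightarrow> 'i list \<Rightarrow> 'k" where
  "ostar f = (\<lambda>w. f (rev w))"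

definition perfect :: "('i \<Rightarrow> 'i \<Rightarrow> int) \<Rightarrow> 'i set \<Rightarrow> ('i list \<Rightarrow> 'k::field) set \<Rightarrow> bool" where
  "perfect A I B \<longleftrightarrow> is_basis_of (Ocar A I) B \<and> (\<forall>b\<in>B. weight_vector b) \<and>
     (\<forall>i\<in>I. \<forall>n. (\<forall>b\<in>B. ell i b = n \<longrightarrow> edp i n b \<in> B \<and> eact i (edp i n b) = (\<lambda>w. 0)) \<and>
                 inj_on (edp i n) {b\<in>B. ell i b = n})"

definition biperfect :: "('i \<Rightarrow> 'i \<Rightarrow> int) \<Rightarrow> 'i set \<Rightarrow> ('i list \<Rightarrow> 'k::field) set \<Rightarrow> bool" where
  "biperfect A I B \<longleftrightarrow> perfect A I B \<and> perfect A I (ostar ` B)"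

text \<open>The grading J_theta.  For a word w (weight lambda = -wt w) J_theta(lambda) = (ht(-lambda), theta(-lambda)).\<close>
definition Jw :: "('i \<Rightarrow> real) \<Rightarrow> 'i list \<Rightarrow> int \<times> real" where
  "Jw \<theta> w = (int (length w), sum_list (map \<theta> w))"

definition Gam :: "('i \<Rightarrow> real) \<Rightarrow> 'i set \<Rightarrow> (int \<times> real) set" where
  "Gam \<theta> I = {Jw \<theta> w | w. set w \<subseteq> I}"

definition Gam_hom :: "('i \<Rightarrow> real) \<Rightarrow> ('i list \<Rightarrow> 'k::field) \<Rightarrow> bool" where
  "Gam_hom \<theta> a \<longleftrightarrow> (\<exists>\<gamma>. \<forall>w. a w \<noteq> 0 \<longrightarrow> Jw \<theta> w = \<gamma>)"

definition Odeg :: "('i \<Rightarrow> 'i \<Rightarrow> int) \<Rightarrow> 'i set \<Rightarrow> ('i \<Rightarrow> real) \<Rightarrow> int \<times> real \<Rightarrow> ('i list \<Rightarrow> 'k::field) set" where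
  "Odeg A I \<theta> \<gamma> = {f \<in> Ocar A I. \<forall>w. f w \<noteq> 0 \<longrightarrow> Jw \<theta> w = \<gamma>}"

text \<open>L_theta(a): the beta with nonzero component of Delta(a) in O^beta (x) O^{|a|-beta};
  Delta(a)(u,v) = a(u v).  R_theta(a) = |a| - L_theta(a).\<close>
definition Lset :: "('i \<Rightarrow> real) \<Rightarrow> ('i list \<Rightarrow> 'k::field) \<Rightarrow> (int \<times> real) set" where
  "Lset \<theta> a = {Jw \<theta> u | u. \<exists>v. a (u @ v) \<noteq> 0}"

definition Rset :: "('i \<Rightarrow> real) \<Rightarrow> ('i list \<Rightarrow> 'k::field) \<Rightarrow> (int \<times> real) set" where
  "Rset \<theta> a = {Jw \<theta> v | v. \<exists>u. a (u @ v) \<noteq> 0}"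

definition Pi1 :: "(int \<times> real) set" where
  "Pi1 = {(r, d). d < 0 \<or> (d = 0 \<and> r \<ge> 0)}"

definition Pi2 :: "(int \<times> real) set" where
  "Pi2 = {(r, d). d > 0 \<or> (d = 0 \<and> r \<ge> 0)}"

definition shift :: "int \<times> real \<Rightarrow> (int \<times> real) set \<Rightarrow> (int \<times> real) set" where
  "shift \<alpha> P = {(fst \<alpha> + fst p, snd \<alpha> + snd p) | p. p \<in> P}"

definition le1 :: "int \<times> real \<Rightarrow> int \<times> real \<Rightarrow> bool" where
  "le1 \<alpha> \<beta> \<longleftrightarrow> shift \<alpha> Pi1 \<subseteq> shift \<beta> Pi1"

definition le2 :: "int \<times> real \<Rightarrow> int \<times> real \<Rightarrow> bool" where
  "le2 \<alpha> \<beta> \<longleftrightarrow> shift \<alpha> Pi2 \<subseteq> shift \<beta> Pi2"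

definition F1 :: "('i \<Rightarrow> 'i \<Rightarrow> int) \<Rightarrow> 'i set \<Rightarrow> ('i \<Rightarrow> real) \<Rightarrow> int \<times> real \<Rightarrow> ('i list \<Rightarrow> 'k::field) set" where
  "F1 A I \<theta> \<gamma> = lin_span {a \<in> Ocar A I. Gam_hom \<theta> a \<and> Lset \<theta> a \<subseteq> shift \<gamma> Pi1}"

definition F2 :: "('i \<Rightarrow> 'i \<Rightarrow> int) \<Rightarrow> 'i set \<Rightarrow> ('i \<Rightarrow> real) \<Rightarrow> int \<times> real \<Rightarrow> ('i list \<Rightarrow> 'k::field) set" where
  "F2 A I \<theta> \<gamma> = lin_span {a \<in> Ocar A I. Gam_hom \<theta> a \<and> Rset \<theta> a \<subseteq> shift \<gamma> Pi2}"

definition F1lt :: "('i \<Rightarrow> 'i \<Rightarrow> int) \<Rightarrow> 'i set \<Rightarrow> ('i \<Rightarrow> real) \<Rightarrow> int \<times> real \<Rightarrow> ('i list \<Rightarrow> 'k::field) set" where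
  "F1lt A I \<theta> \<gamma> = lin_span (\<Union>{F1 A I \<theta> \<beta> | \<beta>. \<beta> \<in> Gam \<theta> I \<and> le1 \<beta> \<gamma> \<and> \<beta> \<noteq> \<gamma>})"

definition F2lt :: "('i \<Rightarrow> 'i \<Rightarrow> int) \<Rightarrow> 'i set \<Rightarrow> ('i \<Rightarrow> real) \<Rightarrow> int \<times> real \<Rightarrow> ('i list \<Rightarrow> 'k::field) set" where
  "F2lt A I \<theta> \<gamma> = lin_span (\<Union>{F2 A I \<theta> \<beta> | \<beta>. \<beta> \<in> Gam \<theta> I \<and> le2 \<beta> \<gamma> \<and> \<beta> \<noteq> \<gamma>})"

definition Ole0 where "Ole0 A I \<theta> = F1 A I \<theta> (0, 0)"
definition Ogt0 where "Ogt0 A I \<theta> = lin_span (\<Union>{F1 A I \<theta> \<gamma> \<inter> Odeg A I \<theta> \<gamma> | \<gamma>. \<gamma> \<in> Gam \<theta> I})"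
definition Oge0 where "Oge0 A I \<theta> = F2 A I \<theta> (0, 0)"
definition Olt0 where "Olt0 A I \<theta> = lin_span (\<Union>{F2 A I \<theta> \<gamma> \<inter> Odeg A I \<theta> \<gamma> | \<gamma>. \<gamma> \<in> Gam \<theta> I})"

text \<open>Elements of O (x) O represented as functionals on pairs of words.\<close>
definition otensor :: "('i list \<Rightarrow> 'k::field) \<Rightarrow> ('i list \<Rightarrow> 'k) \<Rightarrow> 'i list \<times> 'i list \<Rightarrow> 'k" where
  "otensor f g = (\<lambda>(u, v). f u * g v)"

text \<open>Delta-bar' of the class of a in gr'_alpha: the component of Delta(a) in O^alpha (x) O^{|a|-alpha};
  Delta-bar'' of the class of a in gr''_beta: the component in O^{|a|-beta} (x) O^beta.\<close>
definition Dbar1 :: "('i \<Rightarrow> real) \<Rightarrow> int \<times> real \<Rightarrow> ('i list \<Rightarrow> 'k::field) \<Rightarrow> 'i list \<times> 'i list \<Rightarrow> 'k" where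
  "Dbar1 \<theta> \<alpha> a = (\<lambda>(u, v). if Jw \<theta> u = \<alpha> then a (u @ v) else 0)"

definition Dbar2 :: "('i \<Rightarrow> real) \<Rightarrow> int \<times> real \<Rightarrow> ('i list \<Rightarrow> 'k::field) \<Rightarrow> 'i list \<times> 'i list \<Rightarrow> 'k" where
  "Dbar2 \<theta> \<beta> a = (\<lambda>(u, v). if Jw \<theta> v = \<beta> then a (u @ v) else 0)"

definition polite :: "('i \<Rightarrow> 'i \<Rightarrow> int) \<Rightarrow> 'i set \<Rightarrow> ('i list \<Rightarrow> 'k::field) set \<Rightarrow> bool" where
  "polite A I B \<longleftrightarrow> is_basis_of (Ocar A I) B \<and>
     (\<forall>b\<in>B. weight_vector b) \<and>
     (\<forall>i\<in>I. \<forall>n. opow (zeta i) n \<in> B) \<and>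
     (\<forall>\<theta> :: 'i \<Rightarrow> real.
        (\<forall>\<gamma>\<in>Gam \<theta> I. F1 A I \<theta> \<gamma> = lin_span (B \<inter> F1 A I \<theta> \<gamma>)) \<and>
        {Dbar1 \<theta> \<alpha> b | \<alpha> b. \<alpha> \<in> Gam \<theta> I \<and> b \<in> B \<and> b \<in> F1 A I \<theta> \<alpha> \<and> b \<notin> F1lt A I \<theta> \<alpha>}
          = {otensor b1 b2 | b1 b2. b1 \<in> B \<inter> Ogt0 A I \<theta> \<and> b2 \<in> B \<inter> Ole0 A I \<theta>} \<and>
        (\<forall>\<gamma>\<in>Gam \<theta> I. F2 A I \<theta> \<gamma> = lin_span (B \<inter> F2 A I \<theta> \<gamma>)) \<and>
        {Dbar2 \<theta> \<beta> b | \<beta> b. \<beta> \<in> Gam \<theta> I \<and> b \<in> B \<and> b \<in> F2 A I \<theta> \<beta> \<and> b \<notin> F2lt A I \<theta> \<beta>}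
          = {otensor b1 b2 | b1 b2. b1 \<in> B \<inter> Oge0 A I \<theta> \<and> b2 \<in> B \<inter> Olt0 A I \<theta>})"

end

theory Submission
  imports Defs "HOL-Library.Multiset"
begin

(* Fix a letter i and a basis element b with n = ell i b, and take theta equal to -1 on i and
   to a large M on every other letter.  Then the words of grade (n, -n) are exactly i^n, b lies in
   F2 of degree (n, -n) but not in the strictly smaller part, and politeness factors the component
   of Delta(b) in O (x) O^(n,-n) as b1 (x) b2 with b1, b2 in B.  The factor b2 is supported on i^n,
   so by linear independence it is zeta_i^n, which forces b1 = e_i^(n) . b.  If two basis elements
   with the same ell have the same image, their difference lies in F2 of degree (n-1, -(n-1)),
   which is spanned by basis elements and does not contain b; this contradicts independence.
   Perfectness of the starred basis follows by symmetry: * reverses words, turns theta into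
   -theta and exchanges F1 with F2, so it maps polite bases to polite bases. *)

lemma lin_span_base: "f \<in> S \<Longrightarrow> f \<in> lin_span S"
  unfolding lin_span_def by (rule CollectI, rule exI[of _ "{f}"], rule exI[of _ "\<lambda>_. 1"]) auto

lemma lin_span_vanish:
  assumes "f \<in> lin_span S" and "\<And>s. s \<in> S \<Longrightarrow> s w = 0"
  shows "f w = 0"
  using assms unfolding lin_span_def by (auto intro!: sum.neutral)

lemma lin_indep_nonzero:
  assumes "lin_indep B" "b \<in> B"
  shows "b \<noteq> (\<lambda>w. 0)"
proof
  assume "b = (\<lambda>w. 0)"
  then show False
    using assms(1)[unfolded lin_indep_def, rule_format, of "{b}" "\<lambda>_. 1" b] assms(2) by simp
qed

lemma lin_indep_proportional:
  assumes "lin_indep B" "b \<in> B" "b' \<in> B" and scaled: "\<And>w. b w = c * b' w"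
  shows "b = b'"
proof (rule ccontr)
  assume ne: "b \<noteq> b'"
  define cf where "cf s = (if s = b then 1 else - c)" for s
  have "(\<lambda>w. \<Sum>s\<in>{b, b'}. cf s * s w) = (\<lambda>w. 0)"
    using ne by (simp add: cf_def scaled)
  then have "cf b = 0"
    using assms(1)[unfolded lin_indep_def, rule_format, of "{b, b'}" cf b] assms(2,3) by auto
  then show False by (simp add: cf_def)
qed

lemma lin_indep_diff_notin_span:
  assumes "lin_indep B" "b \<in> B" "b' \<in> B" "b \<noteq> b'" "S \<subseteq> B" "b \<notin> S"
  shows "b - b' \<notin> lin_span S"
proof
  assume "b - b' \<in> lin_span S"
  then obtain F c where F: "finite F" "F \<subseteq> S" and comb: "b - b' = (\<lambda>w. \<Sum>s\<in>F. c s * s w)"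
    unfolding lin_span_def by blast
  define G where "G = insert b (insert b' F)"
  define d where "d s = (if s = b then 1 else 0) - (if s = b' then 1 else 0) - (if s \<in> F then c s else 0)" for s
  have "(\<lambda>w. \<Sum>s\<in>G. d s * s w) = (\<lambda>w. 0)"
  proof
    fix w
    have "(\<Sum>s\<in>G. d s * s w) = (\<Sum>s\<in>G. if s = b then s w else 0) - (\<Sum>s\<in>G. if s = b' then s w else 0)
        - (\<Sum>s\<in>G. if s \<in> F then c s * s w else 0)"
      unfolding sum_subtractf[symmetric] by (rule sum.cong) (simp_all add: d_def left_diff_distrib)
    also have "\<dots> = b w - b' w - (\<Sum>s\<in>F. c s * s w)"
      using F(1) by (simp add: G_def sum.inter_restrict[symmetric] Int_absorb1 subset_insertI2)
    finally show "(\<Sum>s\<in>G. d s * s w) = 0" using fun_cong[OF comb, of w] by simp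
  qed
  moreover have "finite G" "G \<subseteq> B" using F assms G_def by auto
  ultimately have "d b = 0" using assms(1)[unfolded lin_indep_def, rule_format, of G d b] by (simp add: G_def)
  moreover have "b \<notin> F" using F assms(6) by blast
  ultimately show False using assms(4) by (simp add: d_def)
qed

section \<open>The operators e_i, the function ell and the powers of zeta\<close>

lemma eact_funpow: "(eact i ^^ n) f = (\<lambda>w. f (w @ replicate n i))"
  by (induction n arbitrary: f)
    (simp_all add: funpow_Suc_right eact_def replicate_append_same del: funpow.simps)

lemma edp_apply: "edp i n f u = f (u @ replicate n i) / of_nat (fact n)"
  by (simp add: edp_def eact_funpow)

lemma finite_support_length_bound:
  assumes "finite {w. f w \<noteq> 0}"
  obtains M where "\<And>w. f w \<noteq> 0 \<Longrightarrow> length w < M"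
  using assms finite_nat_set_iff_bounded[of "length ` {w. f w \<noteq> 0}"] by auto

lemma ell_vanish:
  assumes "finite {w. f w \<noteq> 0}" and "ell i f < m"
  shows "f (u @ replicate m i) = 0"
proof -
  obtain M where "\<And>w. f w \<noteq> 0 \<Longrightarrow> length w < M"
    using finite_support_length_bound[OF assms(1)] by blast
  then have "(eact i ^^ Suc M) f = (\<lambda>w. 0)"
    unfolding eact_funpow by fastforce
  then have "(eact i ^^ Suc (ell i f)) f = (\<lambda>w. 0)"
    unfolding ell_def by (rule LeastI)
  then have "f ((u @ replicate (m - Suc (ell i f)) i) @ replicate (Suc (ell i f)) i) = 0"
    unfolding eact_funpow by (rule fun_cong)
  moreover have "m - Suc (ell i f) + Suc (ell i f) = m" using assms(2) by simp
  ultimately show ?thesis by (metis append.assoc replicate_add)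
qed

lemma ell_witness:
  assumes "f \<noteq> (\<lambda>w. 0)"
  obtains u where "f (u @ replicate (ell i f) i) \<noteq> 0"
proof (cases "ell i f")
  case 0
  then show ?thesis using assms that by auto
next
  case (Suc k)
  then have "(eact i ^^ Suc k) f \<noteq> (\<lambda>w. 0)"
    using not_less_Least[of k "\<lambda>n. (eact i ^^ Suc n) f = (\<lambda>w. 0)"] unfolding ell_def by simp
  then show ?thesis using Suc that unfolding eact_funpow by auto
qed

lemma eact_edp_ell:
  assumes "finite {w. f w \<noteq> 0}"
  shows "eact i (edp i (ell i f) f) = (\<lambda>w. 0)"
  using ell_vanish[OF assms, of i "Suc (ell i f)"]
  by (simp add: fun_eq_iff eact_def edp_apply replicate_append_same[symmetric])

lemma nths_replicate:
  assumes "S \<subseteq> {0..<m}"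
  shows "nths (replicate m x) S = replicate (card S) x"
proof (rule replicate_eqI)
  have "{p. p < m \<and> p \<in> S} = S" using assms by auto
  then show "length (nths (replicate m x) S) = card S" by (simp add: length_nths)
qed (meson in_set_nthsD in_set_replicate)

lemma nths_complement_replicate:
  assumes "S \<subseteq> {0..<length w}"
    and "nths w S = replicate k x" and "nths w ({0..<length w} - S) = replicate m x"
  shows "w = replicate (k + m) x"
proof (rule replicate_eqI)
  have "{p. p < length w \<and> p \<in> S} = S" "{p. p < length w \<and> p \<in> {0..<length w} - S} = {0..<length w} - S"
    using assms(1) by auto
  then have "card S = k" "card ({0..<length w} - S) = m"
    using arg_cong[OF assms(2), of length] arg_cong[OF assms(3), of length] by (simp_all add: length_nths)
  then show "length w = k + m"
    using assms(1) card_Diff_subset[of S "{0..<length w}"] card_mono[of "{0..<length w}" S]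
    by (simp add: finite_subset)
  show "y = x" if "y \<in> set w" for y
  proof -
    obtain p where "p < length w" "y = w ! p" using \<open>y \<in> set w\<close> by (metis in_set_conv_nth)
    then have "y \<in> set (nths w S) \<or> y \<in> set (nths w ({0..<length w} - S))"
      by (cases "p \<in> S") (auto simp: set_nths)
    then show "y = x" using assms(2,3) by auto
  qed
qed

lemma opow_zeta: "opow (zeta i) n w = (if w = replicate n i then of_nat (fact n) else (0::'k::field))"
proof (induction n arbitrary: w)
  case 0
  show ?case by (simp add: opow_def oone_def)
next
  case (Suc n)
  let ?U = "{0..<length w}"
  have expand: "(opow (zeta i) (Suc n) w :: 'k) = (\<Sum>S\<in>Pow ?U. zeta i (nths w S) *
      (if nths w (?U - S) = replicate n i then of_nat (fact n) else 0))"
    using Suc.IH by (simp add: opow_def omult_def)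
  show ?case
  proof (cases "w = replicate (Suc n) i")
    case True
    have "zeta i (nths w S) * (if nths w (?U - S) = replicate n i then of_nat (fact n) else 0)
        = (if card S = 1 then of_nat (fact n) else 0 :: 'k)" if "S \<subseteq> ?U" for S
    proof -
      have "?U - S \<subseteq> {0..<Suc n}" "S \<subseteq> {0..<Suc n}" using that True by auto
      then have "nths w S = replicate (card S) i" "nths w (?U - S) = replicate (card (?U - S)) i"
        unfolding True by (simp_all only: nths_replicate)
      moreover have "card (?U - S) = Suc n - card S" "card S \<le> Suc n"
        using that True card_mono[of ?U S] by (simp_all add: card_Diff_subset finite_subset)
      moreover have "replicate c i = [i] \<longleftrightarrow> c = 1" for c by (cases c) auto
      ultimately show ?thesis by (auto simp: zeta_def replicate_eq_replicate)
    qed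
    then have "(opow (zeta i) (Suc n) w :: 'k) = (\<Sum>S\<in>{S. S \<subseteq> ?U \<and> card S = 1}. of_nat (fact n))"
      unfolding expand by (simp add: sum.inter_filter[symmetric] Pow_def)
    also have "\<dots> = of_nat (Suc n) * of_nat (fact n)"
      using n_subsets[of ?U 1] True by simp
    finally show ?thesis using True by (simp add: algebra_simps)
  next
    case False
    have "zeta i (nths w S) * (if nths w (?U - S) = replicate n i then of_nat (fact n) else 0) = (0 :: 'k)"
      if "S \<subseteq> ?U" for S
      using nths_complement_replicate[OF that, of 1 i n] False by (auto simp: zeta_def)
    then show ?thesis unfolding expand using False by (simp add: sum.neutral)
  qed
qed

section \<open>The grading and the filtration F2\<close>

lemma Jw_eq_if_wt_eq:
  assumes "wt w = wt w'"
  shows "Jw \<theta> w = Jw \<theta> w'"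
proof -
  have "count (mset w) x = count (mset w') x" for x
    using fun_cong[OF assms, of x] by (simp add: wt_def count_mset count_list_eq_length_filter)
  then have "mset w = mset w'" by (rule multiset_eqI)
  then show ?thesis unfolding Jw_def by (metis mset_map size_mset sum_mset_sum_list)
qed

lemma weight_vector_Gam_hom: "weight_vector f \<Longrightarrow> Gam_hom \<theta> f"
  unfolding weight_vector_def Gam_hom_def by (metis Jw_eq_if_wt_eq)

lemma weight_vector_diff:
  assumes "weight_vector f" "weight_vector g" "f w\<^sub>0 \<noteq> 0" "g w\<^sub>0 \<noteq> 0"
  shows "weight_vector (f - g)"
proof -
  obtain \<mu> \<mu>' where "\<And>w. f w \<noteq> 0 \<Longrightarrow> wt w = \<mu>" "\<And>w. g w \<noteq> 0 \<Longrightarrow> wt w = \<mu>'"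
    using assms(1,2) unfolding weight_vector_def by metis
  moreover have "\<mu> = \<mu>'" using calculation assms(3,4) by metis
  ultimately show ?thesis unfolding weight_vector_def by (metis diff_self diff_zero minus_apply)
qed

lemma Ocar_diff:
  assumes "f \<in> Ocar A I" "g \<in> Ocar A I"
  shows "f - g \<in> Ocar A I"
proof -
  have "{w. (f - g) w \<noteq> 0} \<subseteq> {w. f w \<noteq> 0} \<union> {w. g w \<noteq> 0}" by auto
  then have "finite {w. (f - g) w \<noteq> 0}"
    using assms by (auto simp: Ocar_def intro: finite_subset)
  moreover have "\<forall>w. (f - g) w \<noteq> 0 \<longrightarrow> set w \<subseteq> I"
    using assms unfolding Ocar_def by (metis (mono_tags, lifting) CollectD diff_self diff_zero minus_apply)
  moreover have "(\<Sum>k\<le>N. (-1) ^ k * of_nat (N choose k) * (f - g) (x k)) =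
      (\<Sum>k\<le>N. (-1) ^ k * of_nat (N choose k) * f (x k)) -
      (\<Sum>k\<le>N. (-1) ^ k * of_nat (N choose k) * g (x k))" for N x
    by (simp add: right_diff_distrib sum_subtractf)
  ultimately show ?thesis using assms unfolding Ocar_def by simp
qed

lemma mem_shift: "x \<in> shift \<beta> P \<longleftrightarrow> (fst x - fst \<beta>, snd x - snd \<beta>) \<in> P"
  unfolding shift_def by (cases x; cases \<beta>) force

lemma mem_shift_Pi2_self: "\<beta> \<in> shift \<beta> Pi2"
  by (simp add: mem_shift Pi2_def)

lemma mem_shift_Pi2_antisym: "\<alpha> \<in> shift \<beta> Pi2 \<Longrightarrow> \<beta> \<in> shift \<alpha> Pi2 \<Longrightarrow> \<alpha> = \<beta>"
  by (cases \<alpha>; cases \<beta>) (auto simp: mem_shift Pi2_def)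

lemma F2_vanish:
  assumes "f \<in> F2 A I \<theta> \<beta>" and "Jw \<theta> v \<notin> shift \<beta> Pi2"
  shows "f (u @ v) = 0"
  using assms(1) unfolding F2_def
  by (rule lin_span_vanish) (use assms(2) in \<open>auto simp: Rset_def\<close>)

lemma F2lt_vanish:
  assumes "f \<in> F2lt A I \<theta> \<beta>" and "Jw \<theta> v = \<beta>"
  shows "f (u @ v) = 0"
  using assms(1) unfolding F2lt_def
proof (rule lin_span_vanish)
  fix s assume "s \<in> \<Union>{F2 A I \<theta> \<beta>' |\<beta>'. \<beta>' \<in> Gam \<theta> I \<and> le2 \<beta>' \<beta> \<and> \<beta>' \<noteq> \<beta>}"
  then obtain \<beta>' where "s \<in> F2 A I \<theta> \<beta>'" "le2 \<beta>' \<beta>" "\<beta>' \<noteq> \<beta>" by blast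
  moreover from this have "\<beta> \<notin> shift \<beta>' Pi2"
    using mem_shift_Pi2_antisym mem_shift_Pi2_self unfolding le2_def by blast
  ultimately show "s (u @ v) = 0" using F2_vanish assms(2) by blast
qed

lemma Jw_replicate_mem_Gam: "i \<in> I \<Longrightarrow> Jw \<theta> (replicate n i) \<in> Gam \<theta> I"
  unfolding Gam_def by auto

(* For M beyond the length of every word in play, the grade (m, -m) is attained exactly by the
   word i^m, and every other word has positive second coordinate. *)
definition isolating_theta :: "nat \<Rightarrow> 'i \<Rightarrow> 'i \<Rightarrow> real" where
  "isolating_theta M i = (\<lambda>j. if j = i then -1 else real M)"

lemma Jw_isolating_theta:
  "Jw (isolating_theta M i) v = (int (length v),
     real M * real (length (filter (\<lambda>j. j \<noteq> i) v)) - real (length (filter (\<lambda>j. j = i) v)))"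
  by (induction v) (auto simp: Jw_def isolating_theta_def algebra_simps)

lemma Jw_isolating_theta_replicate: "Jw (isolating_theta M i) (replicate m i) = (int m, - real m)"
  by (simp add: Jw_isolating_theta)

lemma Jw_isolating_theta_eq_iff: "Jw (isolating_theta M i) v = (int n, - real n) \<longleftrightarrow> v = replicate n i"
proof
  assume grade: "Jw (isolating_theta M i) v = (int n, - real n)"
  let ?k = "length (filter (\<lambda>j. j \<noteq> i) v)" and ?m = "length (filter (\<lambda>j. j = i) v)"
  have "?m + ?k = length v" using sum_length_filter_compl[of "\<lambda>j. j = i" v] by simp
  with grade have "(real M + 1) * real ?k = 0" by (simp add: Jw_isolating_theta algebra_simps)
  then have "filter (\<lambda>j. j \<noteq> i) v = []" by (simp add: add_nonneg_eq_0_iff)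
  then show "v = replicate n i"
    using grade by (auto simp: Jw_isolating_theta filter_empty_conv intro: replicate_eqI)
qed (simp add: Jw_isolating_theta_replicate)

lemma Jw_isolating_theta_pos:
  assumes "length v < M" and "v \<noteq> replicate (length v) i"
  shows "snd (Jw (isolating_theta M i) v) > 0"
proof -
  have "filter (\<lambda>j. j \<noteq> i) v \<noteq> []"
    using assms(2) by (auto simp: filter_empty_conv intro: replicate_eqI)
  then have "1 \<le> real (length (filter (\<lambda>j. j \<noteq> i) v))"
    by (simp add: Suc_le_eq)
  then have "real M \<le> real M * real (length (filter (\<lambda>j. j \<noteq> i) v))"
    using mult_left_mono[of 1 _ "real M"] by simp
  moreover have "real (length (filter (\<lambda>j. j = i) v)) < real M"
    using assms(1) length_filter_le le_less_trans of_nat_less_iff by blast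
  ultimately show ?thesis unfolding Jw_isolating_theta snd_conv by linarith
qed

lemma mem_F2_isolating_theta:
  assumes "f \<in> Ocar A I" "Gam_hom (isolating_theta M i) f"
    and short: "\<And>w. f w \<noteq> 0 \<Longrightarrow> length w < M"
    and vanish: "\<And>u m. k < m \<Longrightarrow> f (u @ replicate m i) = 0"
  shows "f \<in> F2 A I (isolating_theta M i) (int k, - real k)"
  unfolding F2_def
proof (rule lin_span_base, intro CollectI conjI assms(1,2) subsetI)
  fix x assume "x \<in> Rset (isolating_theta M i) f"
  then obtain u v where x: "x = Jw (isolating_theta M i) v" and nonzero: "f (u @ v) \<noteq> 0"
    unfolding Rset_def by blast
  show "x \<in> shift (int k, - real k) Pi2"
  proof (cases "v = replicate (length v) i")
    case True
    have "length v \<le> k"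
    proof (rule ccontr)
      assume "\<not> length v \<le> k"
      then have "f (u @ v) = 0" using vanish[of "length v" u] True by simp
      with nonzero show False by simp
    qed
    then show ?thesis by (subst x, subst True) (auto simp: Jw_isolating_theta_replicate mem_shift Pi2_def)
  next
    case False
    have "length v < M" using short[OF nonzero] by simp
    then have "0 < snd x" using Jw_isolating_theta_pos False x by simp
    then show ?thesis by (simp add: mem_shift Pi2_def)
  qed
qed

section \<open>Polite bases are perfect\<close>

lemma politeD:
  assumes "polite A I B"
  shows "is_basis_of (Ocar A I) B"
    and "\<forall>b\<in>B. weight_vector b"
    and "\<forall>i\<in>I. \<forall>n. opow (zeta i) n \<in> B"
    and "\<forall>\<gamma>\<in>Gam \<theta> I. F1 A I \<theta> \<gamma> = lin_span (B \<inter> F1 A I \<theta> \<gamma>)"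
    and "{Dbar1 \<theta> \<alpha> b | \<alpha> b. \<alpha> \<in> Gam \<theta> I \<and> b \<in> B \<and> b \<in> F1 A I \<theta> \<alpha> \<and> b \<notin> F1lt A I \<theta> \<alpha>}
      = {otensor b\<^sub>1 b\<^sub>2 | b\<^sub>1 b\<^sub>2. b\<^sub>1 \<in> B \<inter> Ogt0 A I \<theta> \<and> b\<^sub>2 \<in> B \<inter> Ole0 A I \<theta>}"
    and "\<forall>\<gamma>\<in>Gam \<theta> I. F2 A I \<theta> \<gamma> = lin_span (B \<inter> F2 A I \<theta> \<gamma>)"
    and "{Dbar2 \<theta> \<beta> b | \<beta> b. \<beta> \<in> Gam \<theta> I \<and> b \<in> B \<and> b \<in> F2 A I \<theta> \<beta> \<and> b \<notin> F2lt A I \<theta> \<beta>}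
      = {otensor b\<^sub>1 b\<^sub>2 | b\<^sub>1 b\<^sub>2. b\<^sub>1 \<in> B \<inter> Oge0 A I \<theta> \<and> b\<^sub>2 \<in> B \<inter> Olt0 A I \<theta>}"
  using assms unfolding polite_def by - (elim conjE, erule allE[of _ \<theta>], elim conjE, assumption)+

lemma polite_basis_element:
  assumes "polite A I B" "b \<in> B"
  shows "b \<in> Ocar A I" and "finite {w. b w \<noteq> 0}" and "b \<noteq> (\<lambda>w. 0)" and "weight_vector b"
proof -
  have "B \<subseteq> Ocar A I" "lin_indep B" using politeD(1)[OF assms(1)] unfolding is_basis_of_def by blast+
  then show "b \<in> Ocar A I" "b \<noteq> (\<lambda>w. 0)" using assms(2) lin_indep_nonzero by blast+
  then show "finite {w. b w \<noteq> 0}" by (simp add: Ocar_def)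
  show "weight_vector b" using politeD(2)[OF assms(1)] assms(2) by blast
qed

lemma polite_Dbar2_factor:
  assumes "polite A I B" "\<beta> \<in> Gam \<theta> I" "b \<in> B" "b \<in> F2 A I \<theta> \<beta>" "b \<notin> F2lt A I \<theta> \<beta>"
  obtains b\<^sub>1 b\<^sub>2 where "b\<^sub>1 \<in> B" "b\<^sub>2 \<in> B" "Dbar2 \<theta> \<beta> b = otensor b\<^sub>1 b\<^sub>2"
proof -
  have "Dbar2 \<theta> \<beta> b \<in> {Dbar2 \<theta> \<beta> b | \<beta> b. \<beta> \<in> Gam \<theta> I \<and> b \<in> B \<and> b \<in> F2 A I \<theta> \<beta> \<and> b \<notin> F2lt A I \<theta> \<beta>}"
    using assms(2-5) by blast
  then show ?thesis unfolding politeD(7)[OF assms(1)] using that by blast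
qed

lemma polite_edp_ell_mem:
  fixes B :: "('i list \<Rightarrow> 'k::field_char_0) set"
  assumes pol: "polite A I B" and "i \<in> I" "b \<in> B"
  shows "edp i (ell i b) b \<in> B"
proof -
  define n where "n = ell i b"
  note b = polite_basis_element[OF pol \<open>b \<in> B\<close>]
  obtain u\<^sub>0 where u\<^sub>0: "b (u\<^sub>0 @ replicate n i) \<noteq> 0"
    using ell_witness[OF b(3)] n_def by blast
  obtain M where short: "\<And>w. b w \<noteq> 0 \<Longrightarrow> length w < M"
    using finite_support_length_bound[OF b(2)] by blast
  define \<theta> where "\<theta> = isolating_theta M i"
  define \<beta> where "\<beta> = (int n, - real n)"
  have grade: "Jw \<theta> v = \<beta> \<longleftrightarrow> v = replicate n i" for v
    unfolding \<theta>_def \<beta>_def by (rule Jw_isolating_theta_eq_iff)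
  have "b \<in> F2 A I \<theta> \<beta>"
    unfolding \<theta>_def \<beta>_def
  proof (rule mem_F2_isolating_theta[OF b(1) weight_vector_Gam_hom[OF b(4)] short])
    show "b (u @ replicate m i) = 0" if "n < m" for u m
      using ell_vanish[OF b(2)] that n_def by blast
  qed
  moreover have "b \<notin> F2lt A I \<theta> \<beta>"
    using F2lt_vanish[of b A I \<theta> \<beta> "replicate n i" u\<^sub>0] grade u\<^sub>0 by auto
  moreover have "\<beta> \<in> Gam \<theta> I"
    using Jw_replicate_mem_Gam[OF \<open>i \<in> I\<close>, of \<theta> n] grade[of "replicate n i"] by simp
  ultimately obtain b\<^sub>1 b\<^sub>2 where "b\<^sub>1 \<in> B" "b\<^sub>2 \<in> B" and split: "Dbar2 \<theta> \<beta> b = otensor b\<^sub>1 b\<^sub>2"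
    using polite_Dbar2_factor[OF pol _ \<open>b \<in> B\<close>] by metis
  have factor: "b\<^sub>1 u * b\<^sub>2 v = (if v = replicate n i then b (u @ v) else 0)" for u v
    using fun_cong[OF split, of "(u, v)"] grade by (simp add: Dbar2_def otensor_def)
  have "b\<^sub>1 u\<^sub>0 \<noteq> 0" using factor[of u\<^sub>0 "replicate n i"] u\<^sub>0 by auto
  then have "b\<^sub>2 v = b\<^sub>2 (replicate n i) / of_nat (fact n) * opow (zeta i) n v" for v
    using factor[of u\<^sub>0 v] by (cases "v = replicate n i") (simp_all add: opow_zeta)
  moreover have "lin_indep B" "opow (zeta i) n \<in> B"
    using politeD(1,3)[OF pol] \<open>i \<in> I\<close> unfolding is_basis_of_def by blast+
  ultimately have "b\<^sub>2 = opow (zeta i) n"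
    using lin_indep_proportional[OF _ \<open>b\<^sub>2 \<in> B\<close>] by blast
  then have "b\<^sub>1 = edp i n b"
    using factor[of _ "replicate n i"] by (simp add: fun_eq_iff opow_zeta edp_apply eq_divide_eq)
  with \<open>b\<^sub>1 \<in> B\<close> show ?thesis by (simp add: n_def)
qed

lemma polite_diff_mem_F2:
  assumes pol: "polite A I B" and "b \<in> B" "b' \<in> B" "b \<noteq> b'" "\<beta> \<in> Gam \<theta> I"
    and "b - b' \<in> F2 A I \<theta> \<beta>"
  shows "b \<in> F2 A I \<theta> \<beta>"
proof (rule ccontr)
  assume "b \<notin> F2 A I \<theta> \<beta>"
  moreover have "lin_indep B" using politeD(1)[OF pol] unfolding is_basis_of_def by blast
  ultimately have "b - b' \<notin> lin_span (B \<inter> F2 A I \<theta> \<beta>)"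
    using lin_indep_diff_notin_span assms(2-4) by blast
  then show False using assms(6) bspec[OF politeD(6)[OF pol] \<open>\<beta> \<in> Gam \<theta> I\<close>] by simp
qed

lemma polite_edp_ell_inj:
  fixes B :: "('i list \<Rightarrow> 'k::field_char_0) set"
  assumes pol: "polite A I B" and "i \<in> I" "b \<in> B" "b' \<in> B"
    and same_ell: "ell i b = ell i b'" and same_edp: "edp i (ell i b) b = edp i (ell i b') b'"
  shows "b = b'"
proof (rule ccontr)
  assume "b \<noteq> b'"
  define n where "n = ell i b"
  note b = polite_basis_element[OF pol \<open>b \<in> B\<close>]
  note b' = polite_basis_element[OF pol \<open>b' \<in> B\<close>]
  have agree: "b (u @ replicate n i) = b' (u @ replicate n i)" for u
    using fun_cong[OF same_edp, of u] same_ell by (simp add: n_def edp_apply)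
  have "n \<noteq> 0"
  proof
    assume "n = 0"
    then have "b = b'" using agree by (simp add: fun_eq_iff)
    with \<open>b \<noteq> b'\<close> show False ..
  qed
  obtain u\<^sub>0 where u\<^sub>0: "b (u\<^sub>0 @ replicate n i) \<noteq> 0"
    using ell_witness[OF b(3)] n_def by blast
  have diff: "b - b' \<in> Ocar A I" "weight_vector (b - b')"
    using Ocar_diff[OF b(1) b'(1)] weight_vector_diff[OF b(4) b'(4) u\<^sub>0] agree u\<^sub>0 by auto
  obtain M where short: "\<And>w. (b - b') w \<noteq> 0 \<Longrightarrow> length w < M"
    using finite_support_length_bound diff(1) unfolding Ocar_def by blast
  define \<theta> where "\<theta> = isolating_theta M i"
  define \<beta> where "\<beta> = (int (n - 1), - real (n - 1))"
  have "b - b' \<in> F2 A I \<theta> \<beta>"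
    unfolding \<theta>_def \<beta>_def
  proof (rule mem_F2_isolating_theta[OF diff(1) weight_vector_Gam_hom[OF diff(2)] short])
    show "(b - b') (u @ replicate m i) = 0" if "n - 1 < m" for u m
    proof (cases "m = n")
      case False
      then have "ell i b < m" "ell i b' < m" using that same_ell n_def by auto
      then show ?thesis using ell_vanish[OF b(2)] ell_vanish[OF b'(2)] by simp
    qed (simp add: agree)
  qed
  moreover have "\<beta> \<in> Gam \<theta> I"
    using Jw_replicate_mem_Gam[OF \<open>i \<in> I\<close>, of \<theta> "n - 1"]
    by (simp add: \<theta>_def \<beta>_def Jw_isolating_theta_replicate)
  ultimately have "b \<in> F2 A I \<theta> \<beta>"
    using polite_diff_mem_F2[OF pol \<open>b \<in> B\<close> \<open>b' \<in> B\<close> \<open>b \<noteq> b'\<close>] by blast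
  moreover have "Jw \<theta> (replicate n i) \<notin> shift \<beta> Pi2"
    using \<open>n \<noteq> 0\<close>
    by (simp add: \<theta>_def \<beta>_def Jw_isolating_theta_replicate mem_shift Pi2_def of_nat_diff)
  ultimately show False using F2_vanish u\<^sub>0 by blast
qed

lemma polite_imp_perfect:
  fixes B :: "('i list \<Rightarrow> 'k::field_char_0) set"
  assumes pol: "polite A I B"
  shows "perfect A I B"
  unfolding perfect_def
proof (intro conjI ballI allI impI)
  show "is_basis_of (Ocar A I) B" using politeD(1)[OF pol] .
  show "weight_vector b" if "b \<in> B" for b using polite_basis_element(4)[OF pol that] .
  fix i n assume i: "i \<in> I"
  show "edp i n b \<in> B" if "b \<in> B" "ell i b = n" for b
    using polite_edp_ell_mem[OF pol i \<open>b \<in> B\<close>] that(2) by simp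
  show "eact i (edp i n b) = (\<lambda>w. 0)" if "b \<in> B" "ell i b = n" for b
    using eact_edp_ell[OF polite_basis_element(2)[OF pol \<open>b \<in> B\<close>], of i] that(2) by simp
  show "inj_on (edp i n) {b \<in> B. ell i b = n}"
    by (rule inj_onI) (use polite_edp_ell_inj[OF pol i] in auto)
qed

section \<open>The involution ostar exchanges the two filtrations\<close>

lemma ostar_ostar [simp]: "ostar (ostar f) = f"
  by (simp add: ostar_def)

lemma ostar_apply: "ostar f w = f (rev w)"
  by (simp add: ostar_def)

lemma inj_ostar: "inj ostar"
  by (metis injI ostar_ostar)

lemma ostar_image_ostar_image [simp]: "ostar ` ostar ` S = S"
  by (simp add: image_image)

lemma ostar_lin_comb: "ostar (\<lambda>w. \<Sum>s\<in>F. c s * s w) = (\<lambda>w. \<Sum>s\<in>ostar ` F. c (ostar s) * s w)"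
  unfolding sum.reindex[OF inj_on_subset[OF inj_ostar subset_UNIV]] by (simp add: ostar_def)

lemma lin_span_ostar: "lin_span (ostar ` S) = ostar ` lin_span S"
proof -
  have image_sub: "ostar ` lin_span T \<subseteq> lin_span (ostar ` T)" for T
  proof
    fix f assume "f \<in> ostar ` lin_span T"
    then obtain F c where "finite F" "F \<subseteq> T" "f = ostar (\<lambda>w. \<Sum>s\<in>F. c s * s w)"
      unfolding lin_span_def by blast
    then show "f \<in> lin_span (ostar ` T)"
      unfolding lin_span_def ostar_lin_comb
      by (intro CollectI exI[of _ "ostar ` F"] exI[of _ "\<lambda>s. c (ostar s)"]) auto
  qed
  have "ostar ` ostar ` lin_span (ostar ` S) \<subseteq> ostar ` lin_span S"
    using image_mono[OF image_sub[of "ostar ` S"], of ostar] by simp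
  then show ?thesis using image_sub[of S] by simp
qed

lemma lin_indep_ostar:
  assumes "lin_indep S"
  shows "lin_indep (ostar ` S)"
  unfolding lin_indep_def
proof (intro allI impI ballI)
  fix F c s assume F: "finite F" "F \<subseteq> ostar ` S" and zero: "(\<lambda>w. \<Sum>s\<in>F. c s * s w) = (\<lambda>w. 0)"
    and s: "s \<in> F"
  have "(\<lambda>w. \<Sum>t\<in>ostar ` F. (c \<circ> ostar) t * t w) = (\<lambda>w. 0)"
    using arg_cong[OF zero, of ostar] by (simp add: ostar_lin_comb[symmetric]) (simp add: ostar_def)
  moreover have "ostar ` F \<subseteq> S" using image_mono[OF F(2), of ostar] by simp
  ultimately have "(c \<circ> ostar) (ostar s) = 0"
    using assms[unfolded lin_indep_def, rule_format, of "ostar ` F" "c \<circ> ostar" "ostar s"] F(1) s by blast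
  then show "c s = 0" by simp
qed

definition mirror_grade :: "int \<times> real \<Rightarrow> int \<times> real" where
  "mirror_grade \<gamma> = (fst \<gamma>, - snd \<gamma>)"

lemma mirror_grade_mirror_grade [simp]: "mirror_grade (mirror_grade \<gamma>) = \<gamma>"
  by (simp add: mirror_grade_def)

lemma inj_mirror_grade: "inj mirror_grade"
  by (metis injI mirror_grade_mirror_grade)

lemma mirror_grade_zero: "mirror_grade (0, 0) = (0, 0)"
  by (simp add: mirror_grade_def)

lemma Jw_uminus: "Jw (- \<theta>) w = mirror_grade (Jw \<theta> w)"
  by (induction w) (simp_all add: Jw_def mirror_grade_def)

lemma Jw_rev: "Jw \<theta> (rev w) = Jw \<theta> w"
  by (simp add: Jw_def rev_map[symmetric])

lemma Rset_uminus_ostar: "Rset (- \<theta>) (ostar a) = mirror_grade ` Lset \<theta> a"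
proof (intro equalityI subsetI)
  fix x assume "x \<in> Rset (- \<theta>) (ostar a)"
  then obtain u v where "x = mirror_grade (Jw \<theta> (rev v))" "a (rev v @ rev u) \<noteq> 0"
    by (auto simp: Rset_def ostar_def Jw_uminus Jw_rev)
  then show "x \<in> mirror_grade ` Lset \<theta> a" unfolding Lset_def by blast
next
  fix x assume "x \<in> mirror_grade ` Lset \<theta> a"
  then obtain u v where "x = Jw (- \<theta>) (rev u)" "ostar a (rev v @ rev u) \<noteq> 0"
    by (auto simp: Lset_def ostar_def Jw_uminus Jw_rev)
  then show "x \<in> Rset (- \<theta>) (ostar a)" unfolding Rset_def by blast
qed

lemma mem_mirror_grade_image: "x \<in> mirror_grade ` S \<longleftrightarrow> mirror_grade x \<in> S"
  by (metis image_iff mirror_grade_mirror_grade)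

lemma shift_mirror_grade_Pi2: "shift (mirror_grade \<gamma>) Pi2 = mirror_grade ` shift \<gamma> Pi1"
  by (rule set_eqI, simp only: mem_mirror_grade_image) (auto simp: mem_shift mirror_grade_def Pi1_def Pi2_def)

lemma le2_mirror_grade: "le2 (mirror_grade \<alpha>) (mirror_grade \<beta>) \<longleftrightarrow> le1 \<alpha> \<beta>"
  unfolding le1_def le2_def shift_mirror_grade_Pi2 by (rule inj_image_subset_iff[OF inj_mirror_grade])

lemma Gam_uminus: "Gam (- \<theta>) I = mirror_grade ` Gam \<theta> I"
  unfolding Gam_def Jw_uminus by blast

lemma Gam_hom_uminus_ostar: "Gam_hom (- \<theta>) (ostar a) \<longleftrightarrow> Gam_hom \<theta> a"
proof
  assume "Gam_hom (- \<theta>) (ostar a)"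
  then obtain \<gamma> where \<gamma>: "\<And>w. a (rev w) \<noteq> 0 \<Longrightarrow> mirror_grade (Jw \<theta> w) = \<gamma>"
    unfolding Gam_hom_def ostar_def Jw_uminus by blast
  have "Jw \<theta> w = mirror_grade \<gamma>" if "a w \<noteq> 0" for w
    using \<gamma>[of "rev w"] that by (metis Jw_rev mirror_grade_mirror_grade rev_rev_ident)
  then show "Gam_hom \<theta> a" unfolding Gam_hom_def by blast
next
  assume "Gam_hom \<theta> a"
  then obtain \<gamma> where \<gamma>: "\<And>w. a w \<noteq> 0 \<Longrightarrow> Jw \<theta> w = \<gamma>"
    unfolding Gam_hom_def by blast
  have "Jw (- \<theta>) w = mirror_grade \<gamma>" if "ostar a w \<noteq> 0" for w
    using \<gamma>[of "rev w"] that by (simp add: Jw_uminus Jw_rev ostar_def)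
  then show "Gam_hom (- \<theta>) (ostar a)" unfolding Gam_hom_def by blast
qed

lemma sum_alternating_binomial_reflect:
  fixes g :: "nat \<Rightarrow> nat \<Rightarrow> 'a::comm_ring_1"
  shows "(\<Sum>k\<le>N. (-1) ^ k * of_nat (N choose k) * g (N - k) k)
    = (-1) ^ N * (\<Sum>k\<le>N. (-1) ^ k * of_nat (N choose k) * g k (N - k))"
proof -
  have "(\<Sum>k\<le>N. (-1) ^ k * of_nat (N choose k) * g (N - k) k)
      = (\<Sum>k\<le>N. (-1) ^ (N - k) * of_nat (N choose (N - k)) * g k (N - k))"
    using sum.atLeastAtMost_rev[of "\<lambda>k. (-1) ^ k * of_nat (N choose k) * g (N - k) k" 0 N]
    by (simp add: atLeast0AtMost)
  also have "\<dots> = (\<Sum>k\<le>N. (-1) ^ N * ((-1) ^ k * of_nat (N choose k) * g k (N - k)))"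
  proof (rule sum.cong)
    fix k assume "k \<in> {..N}"
    have "((-1) ^ k * (-1) ^ k :: 'a) = 1" by (simp add: power_add[symmetric])
    moreover have "((-1) ^ N :: 'a) = (-1) ^ (N - k) * (-1) ^ k"
      using \<open>k \<in> {..N}\<close> by (simp add: power_add[symmetric])
    ultimately have "(-1) ^ N * (-1) ^ k = ((-1) ^ (N - k) :: 'a)"
      by (simp add: mult.assoc)
    then show "(-1) ^ (N - k) * of_nat (N choose (N - k)) * g k (N - k)
        = (-1) ^ N * ((-1) ^ k * of_nat (N choose k) * g k (N - k))"
      using \<open>k \<in> {..N}\<close> by (simp add: binomial_symmetric[symmetric] mult.assoc[symmetric])
  qed simp
  finally show ?thesis by (simp add: sum_distrib_left)
qed

lemma ostar_mem_Ocar: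
  assumes "f \<in> Ocar A I"
  shows "ostar f \<in> Ocar A I"
proof -
  note f = assms[unfolded Ocar_def mem_Collect_eq]
  show ?thesis
    unfolding Ocar_def mem_Collect_eq
  proof (intro conjI allI impI)
    show "set w \<subseteq> I" if "ostar f w \<noteq> 0" for w
      using conjunct1[OF f, rule_format, of "rev w"] that by (simp add: ostar_def)
    have "finite (rev -` {w. f w \<noteq> 0})"
      using conjunct1[OF conjunct2[OF f]] by (rule finite_vimageI) (simp add: inj_def)
    then show "finite {w. ostar f w \<noteq> 0}" by (simp add: ostar_def)
    fix u v i j assume ij: "i \<in> I" "j \<in> I" "i \<noteq> j"
    let ?N = "nat (1 - A i j)"
    let ?g = "\<lambda>a b. f (rev v @ replicate a i @ [j] @ replicate b i @ rev u)"
    have "(\<Sum>k\<le>?N. (-1) ^ k * of_nat (?N choose k) * ?g k (?N - k)) = 0"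
      using conjunct2[OF conjunct2[OF f], rule_format, OF ij] .
    then show "(\<Sum>k\<le>?N. (-1) ^ k * of_nat (?N choose k) *
        ostar f (u @ replicate k i @ [j] @ replicate (?N - k) i @ v)) = 0"
      using sum_alternating_binomial_reflect[of ?N ?g] by (simp add: ostar_def)
  qed
qed

lemma ostar_mem_Ocar_iff: "ostar f \<in> Ocar A I \<longleftrightarrow> f \<in> Ocar A I"
  using ostar_mem_Ocar ostar_ostar by metis

lemma uminus_uminus_fun [simp]: "- (- \<theta>) = (\<theta> :: 'a \<Rightarrow> real)"
  by (simp add: fun_eq_iff)

lemma ostar_image_eqI:
  assumes "\<And>a. ostar a \<in> T \<longleftrightarrow> a \<in> S"
  shows "ostar ` S = T"
proof (intro equalityI subsetI)
  fix x assume "x \<in> T"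
  then have "ostar x \<in> S" using assms[of "ostar x"] by simp
  then show "x \<in> ostar ` S" by (metis image_eqI ostar_ostar)
qed (use assms in blast)

lemma ostar_image_Union_mirror_grade:
  assumes "\<And>\<beta>. ostar ` X \<beta> = Y (mirror_grade \<beta>)"
  shows "ostar ` \<Union>{X \<beta> | \<beta>. P \<beta>} = \<Union>{Y \<beta> | \<beta>. P (mirror_grade \<beta>)}"
proof (intro equalityI subsetI)
  fix x assume "x \<in> ostar ` \<Union>{X \<beta> | \<beta>. P \<beta>}"
  then obtain \<beta> f where "P \<beta>" "f \<in> X \<beta>" "x = ostar f" by blast
  then have "x \<in> Y (mirror_grade \<beta>)" "P (mirror_grade (mirror_grade \<beta>))"
    using assms[of \<beta>] by auto
  then show "x \<in> \<Union>{Y \<beta> | \<beta>. P (mirror_grade \<beta>)}" by blast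
next
  fix x assume "x \<in> \<Union>{Y \<beta> | \<beta>. P (mirror_grade \<beta>)}"
  then obtain \<beta> where "P (mirror_grade \<beta>)" "x \<in> Y \<beta>" by blast
  moreover have "Y \<beta> = ostar ` X (mirror_grade \<beta>)" using assms[of "mirror_grade \<beta>"] by simp
  ultimately show "x \<in> ostar ` \<Union>{X \<beta> | \<beta>. P \<beta>}" by blast
qed

lemma ostar_image_F1: "ostar ` F1 A I \<theta> \<gamma> = F2 A I (- \<theta>) (mirror_grade \<gamma>)"
proof -
  have "ostar ` {a \<in> Ocar A I. Gam_hom \<theta> a \<and> Lset \<theta> a \<subseteq> shift \<gamma> Pi1}
      = {a \<in> Ocar A I. Gam_hom (- \<theta>) a \<and> Rset (- \<theta>) a \<subseteq> shift (mirror_grade \<gamma>) Pi2}"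
    by (rule ostar_image_eqI) (simp add: ostar_mem_Ocar_iff Gam_hom_uminus_ostar Rset_uminus_ostar
        shift_mirror_grade_Pi2 inj_image_subset_iff[OF inj_mirror_grade])
  then show ?thesis unfolding F1_def F2_def lin_span_ostar[symmetric] by (rule arg_cong)
qed

lemma ostar_image_F2: "ostar ` F2 A I \<theta> \<gamma> = F1 A I (- \<theta>) (mirror_grade \<gamma>)"
proof -
  have "ostar ` ostar ` F1 A I (- \<theta>) (mirror_grade \<gamma>) = ostar ` F2 A I \<theta> \<gamma>"
    by (simp only: ostar_image_F1 uminus_uminus_fun mirror_grade_mirror_grade)
  then show ?thesis by (simp only: ostar_image_ostar_image) (rule sym)
qed

lemma mirror_grade_strictly_below:
  "(mirror_grade \<beta> \<in> Gam \<theta> I \<and> le1 (mirror_grade \<beta>) \<gamma> \<and> mirror_grade \<beta> \<noteq> \<gamma>) \<longleftrightarrow>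
   (\<beta> \<in> Gam (- \<theta>) I \<and> le2 \<beta> (mirror_grade \<gamma>) \<and> \<beta> \<noteq> mirror_grade \<gamma>)"
  using le2_mirror_grade[of "mirror_grade \<beta>" \<gamma>]
  by (auto simp: Gam_uminus mem_mirror_grade_image)

lemma ostar_image_F1lt: "ostar ` F1lt A I \<theta> \<gamma> = F2lt A I (- \<theta>) (mirror_grade \<gamma>)"
  unfolding F1lt_def F2lt_def lin_span_ostar[symmetric]
    ostar_image_Union_mirror_grade[of "F1 A I \<theta>" "F2 A I (- \<theta>)", OF ostar_image_F1]
    mirror_grade_strictly_below ..

lemma ostar_image_F2lt: "ostar ` F2lt A I \<theta> \<gamma> = F1lt A I (- \<theta>) (mirror_grade \<gamma>)"
proof -
  have "ostar ` ostar ` F1lt A I (- \<theta>) (mirror_grade \<gamma>) = ostar ` F2lt A I \<theta> \<gamma>"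
    by (simp only: ostar_image_F1lt uminus_uminus_fun mirror_grade_mirror_grade)
  then show ?thesis by (simp only: ostar_image_ostar_image) (rule sym)
qed

lemma ostar_image_Odeg: "ostar ` Odeg A I \<theta> \<gamma> = Odeg A I (- \<theta>) (mirror_grade \<gamma>)"
proof (rule ostar_image_eqI)
  fix a :: "'a list \<Rightarrow> 'b"
  have "(\<forall>w. a (rev w) \<noteq> 0 \<longrightarrow> Jw \<theta> w = \<gamma>) \<longleftrightarrow> (\<forall>w. a w \<noteq> 0 \<longrightarrow> Jw \<theta> w = \<gamma>)"
    by (metis Jw_rev rev_rev_ident)
  then show "ostar a \<in> Odeg A I (- \<theta>) (mirror_grade \<gamma>) \<longleftrightarrow> a \<in> Odeg A I \<theta> \<gamma>"
    by (simp add: Odeg_def ostar_mem_Ocar_iff Jw_uminus inj_eq[OF inj_mirror_grade] ostar_apply)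
qed

lemma ostar_image_Ogt0: "ostar ` Ogt0 A I \<theta> = Olt0 A I (- \<theta>)"
proof -
  have pieces: "ostar ` (F1 A I \<theta> \<gamma> \<inter> Odeg A I \<theta> \<gamma>)
      = F2 A I (- \<theta>) (mirror_grade \<gamma>) \<inter> Odeg A I (- \<theta>) (mirror_grade \<gamma>)" for \<gamma>
    by (simp add: image_Int[OF inj_ostar] ostar_image_F1 ostar_image_Odeg)
  have grades: "mirror_grade \<gamma> \<in> Gam \<theta> I \<longleftrightarrow> \<gamma> \<in> Gam (- \<theta>) I" for \<gamma>
    by (simp add: Gam_uminus mem_mirror_grade_image)
  show ?thesis
    unfolding Ogt0_def Olt0_def lin_span_ostar[symmetric]
      ostar_image_Union_mirror_grade[of "\<lambda>\<gamma>. F1 A I \<theta> \<gamma> \<inter> Odeg A I \<theta> \<gamma>"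
        "\<lambda>\<gamma>. F2 A I (- \<theta>) \<gamma> \<inter> Odeg A I (- \<theta>) \<gamma>", OF pieces] grades ..
qed

lemma ostar_image_Olt0: "ostar ` Olt0 A I \<theta> = Ogt0 A I (- \<theta>)"
proof -
  have "ostar ` ostar ` Ogt0 A I (- \<theta>) = ostar ` Olt0 A I \<theta>"
    by (simp only: ostar_image_Ogt0 uminus_uminus_fun)
  then show ?thesis by (simp only: ostar_image_ostar_image) (rule sym)
qed

lemma ostar_image_Ole0: "ostar ` Ole0 A I \<theta> = Oge0 A I (- \<theta>)"
  by (simp add: Ole0_def Oge0_def ostar_image_F1 mirror_grade_zero)

lemma ostar_image_Oge0: "ostar ` Oge0 A I \<theta> = Ole0 A I (- \<theta>)"
  by (simp add: Ole0_def Oge0_def ostar_image_F2 mirror_grade_zero)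

(* The involution induced on O (x) O: since Delta b (u, v) = b (u @ v), we have
   Delta (ostar b) = flip_tensor (Delta b). *)
definition flip_tensor :: "('i list \<times> 'i list \<Rightarrow> 'k) \<Rightarrow> 'i list \<times> 'i list \<Rightarrow> 'k" where
  "flip_tensor h = (\<lambda>(u, v). h (rev v, rev u))"

lemma flip_tensor_otensor: "flip_tensor (otensor f g) = otensor (ostar g) (ostar f)"
  by (simp add: fun_eq_iff flip_tensor_def otensor_def ostar_def)

lemma Dbar2_uminus_ostar: "Dbar2 (- \<theta>) (mirror_grade \<alpha>) (ostar b) = flip_tensor (Dbar1 \<theta> \<alpha> b)"
  by (simp add: fun_eq_iff Dbar1_def Dbar2_def flip_tensor_def ostar_def Jw_uminus Jw_rev
      inj_eq[OF inj_mirror_grade])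

lemma Dbar1_uminus_ostar: "Dbar1 (- \<theta>) (mirror_grade \<beta>) (ostar b) = flip_tensor (Dbar2 \<theta> \<beta> b)"
  by (simp add: fun_eq_iff Dbar1_def Dbar2_def flip_tensor_def ostar_def Jw_uminus Jw_rev
      inj_eq[OF inj_mirror_grade])

lemma ostar_image_Ocar: "ostar ` Ocar A I = Ocar A I"
  by (rule ostar_image_eqI) (rule ostar_mem_Ocar_iff)

lemma is_basis_of_ostar:
  assumes "is_basis_of (Ocar A I) B"
  shows "is_basis_of (Ocar A I) (ostar ` B)"
proof -
  have "B \<subseteq> Ocar A I" "lin_indep B" "lin_span B = Ocar A I"
    using assms unfolding is_basis_of_def by blast+
  then show ?thesis
    using image_mono[OF \<open>B \<subseteq> Ocar A I\<close>, of ostar]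
    unfolding is_basis_of_def by (simp add: lin_indep_ostar lin_span_ostar ostar_image_Ocar)
qed

lemma wt_rev: "wt (rev w) = wt w"
  by (simp add: wt_def rev_filter[symmetric])

lemma weight_vector_ostar: "weight_vector f \<Longrightarrow> weight_vector (ostar f)"
  unfolding weight_vector_def ostar_apply by (metis wt_rev)

lemma ostar_opow_zeta: "ostar (opow (zeta i) n) = opow (zeta i) n"
proof -
  have "rev w = replicate n i \<longleftrightarrow> w = replicate n i" for w
    by (metis rev_replicate rev_rev_ident)
  then show ?thesis by (simp add: fun_eq_iff ostar_apply opow_zeta)
qed

lemma span_condition_ostar:
  "Y = lin_span (B \<inter> Y) \<Longrightarrow> ostar ` Y = lin_span (ostar ` B \<inter> ostar ` Y)"
  by (simp add: lin_span_ostar image_Int[OF inj_ostar, symmetric])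

lemma flip_tensor_image_tensor_products:
  "flip_tensor ` {otensor b\<^sub>1 b\<^sub>2 | b\<^sub>1 b\<^sub>2. b\<^sub>1 \<in> B \<inter> P \<and> b\<^sub>2 \<in> B \<inter> Q}
    = {otensor c\<^sub>1 c\<^sub>2 | c\<^sub>1 c\<^sub>2. c\<^sub>1 \<in> ostar ` B \<inter> ostar ` Q \<and> c\<^sub>2 \<in> ostar ` B \<inter> ostar ` P}"
proof (intro equalityI subsetI)
  fix x assume "x \<in> flip_tensor ` {otensor b\<^sub>1 b\<^sub>2 | b\<^sub>1 b\<^sub>2. b\<^sub>1 \<in> B \<inter> P \<and> b\<^sub>2 \<in> B \<inter> Q}"
  then obtain b\<^sub>1 b\<^sub>2 where "b\<^sub>1 \<in> B \<inter> P" "b\<^sub>2 \<in> B \<inter> Q" "x = otensor (ostar b\<^sub>2) (ostar b\<^sub>1)"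
    using flip_tensor_otensor by blast
  then show "x \<in> {otensor c\<^sub>1 c\<^sub>2 | c\<^sub>1 c\<^sub>2. c\<^sub>1 \<in> ostar ` B \<inter> ostar ` Q \<and> c\<^sub>2 \<in> ostar ` B \<inter> ostar ` P}"
    by blast
next
  fix x assume "x \<in> {otensor c\<^sub>1 c\<^sub>2 | c\<^sub>1 c\<^sub>2. c\<^sub>1 \<in> ostar ` B \<inter> ostar ` Q \<and> c\<^sub>2 \<in> ostar ` B \<inter> ostar ` P}"
  then obtain b\<^sub>1 b\<^sub>2 where "b\<^sub>1 \<in> B \<inter> P" "b\<^sub>2 \<in> B \<inter> Q" "x = otensor (ostar b\<^sub>2) (ostar b\<^sub>1)"
    unfolding image_Int[OF inj_ostar, symmetric] by blast
  then show "x \<in> flip_tensor ` {otensor b\<^sub>1 b\<^sub>2 | b\<^sub>1 b\<^sub>2. b\<^sub>1 \<in> B \<inter> P \<and> b\<^sub>2 \<in> B \<inter> Q}"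
    unfolding flip_tensor_otensor[symmetric] by blast
qed

lemma factorisation_condition_ostar:
  assumes cond: "{D \<beta> b | \<beta> b. \<beta> \<in> G \<and> b \<in> B \<and> b \<in> X \<beta> \<and> b \<notin> Y \<beta>}
      = {otensor b\<^sub>1 b\<^sub>2 | b\<^sub>1 b\<^sub>2. b\<^sub>1 \<in> B \<inter> P \<and> b\<^sub>2 \<in> B \<inter> Q}"
    and G': "G' = mirror_grade ` G"
    and X': "\<And>\<beta>. X' (mirror_grade \<beta>) = ostar ` X \<beta>" and Y': "\<And>\<beta>. Y' (mirror_grade \<beta>) = ostar ` Y \<beta>"
    and D': "\<And>\<beta> b. D' (mirror_grade \<beta>) (ostar b) = flip_tensor (D \<beta> b)"
    and P': "P' = ostar ` Q" and Q': "Q' = ostar ` P"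
  shows "{D' \<alpha> c | \<alpha> c. \<alpha> \<in> G' \<and> c \<in> ostar ` B \<and> c \<in> X' \<alpha> \<and> c \<notin> Y' \<alpha>}
      = {otensor c\<^sub>1 c\<^sub>2 | c\<^sub>1 c\<^sub>2. c\<^sub>1 \<in> ostar ` B \<inter> P' \<and> c\<^sub>2 \<in> ostar ` B \<inter> Q'}"
proof -
  have "{D' \<alpha> c | \<alpha> c. \<alpha> \<in> G' \<and> c \<in> ostar ` B \<and> c \<in> X' \<alpha> \<and> c \<notin> Y' \<alpha>}
      = flip_tensor ` {D \<beta> b | \<beta> b. \<beta> \<in> G \<and> b \<in> B \<and> b \<in> X \<beta> \<and> b \<notin> Y \<beta>}"
  proof (intro equalityI subsetI)
    fix x assume "x \<in> {D' \<alpha> c | \<alpha> c. \<alpha> \<in> G' \<and> c \<in> ostar ` B \<and> c \<in> X' \<alpha> \<and> c \<notin> Y' \<alpha>}"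
    then obtain \<beta> b where "\<beta> \<in> G" "b \<in> B" "ostar b \<in> X' (mirror_grade \<beta>)" "ostar b \<notin> Y' (mirror_grade \<beta>)"
      and x: "x = D' (mirror_grade \<beta>) (ostar b)"
      using G' by blast
    then have "b \<in> X \<beta>" "b \<notin> Y \<beta>"
      unfolding X' Y' inj_image_mem_iff[OF inj_ostar] by simp_all
    then show "x \<in> flip_tensor ` {D \<beta> b | \<beta> b. \<beta> \<in> G \<and> b \<in> B \<and> b \<in> X \<beta> \<and> b \<notin> Y \<beta>}"
      using \<open>\<beta> \<in> G\<close> \<open>b \<in> B\<close> unfolding x D' by blast
  next
    fix x assume "x \<in> flip_tensor ` {D \<beta> b | \<beta> b. \<beta> \<in> G \<and> b \<in> B \<and> b \<in> X \<beta> \<and> b \<notin> Y \<beta>}"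
    then obtain \<beta> b where "\<beta> \<in> G" "b \<in> B" "b \<in> X \<beta>" "b \<notin> Y \<beta>" and x: "x = flip_tensor (D \<beta> b)"
      by blast
    then have "mirror_grade \<beta> \<in> G'" "ostar b \<in> ostar ` B"
      "ostar b \<in> X' (mirror_grade \<beta>)" "ostar b \<notin> Y' (mirror_grade \<beta>)"
      unfolding G' X' Y' inj_image_mem_iff[OF inj_ostar] by simp_all
    then show "x \<in> {D' \<alpha> c | \<alpha> c. \<alpha> \<in> G' \<and> c \<in> ostar ` B \<and> c \<in> X' \<alpha> \<and> c \<notin> Y' \<alpha>}"
      unfolding x D'[symmetric] by blast
  qed
  also have "\<dots> = flip_tensor ` {otensor b\<^sub>1 b\<^sub>2 | b\<^sub>1 b\<^sub>2. b\<^sub>1 \<in> B \<inter> P \<and> b\<^sub>2 \<in> B \<inter> Q}"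
    by (simp only: cond)
  also have "\<dots> = {otensor c\<^sub>1 c\<^sub>2 | c\<^sub>1 c\<^sub>2. c\<^sub>1 \<in> ostar ` B \<inter> P' \<and> c\<^sub>2 \<in> ostar ` B \<inter> Q'}"
    unfolding P' Q' by (rule flip_tensor_image_tensor_products)
  finally show ?thesis .
qed

lemma polite_ostar:
  assumes pol: "polite A I B"
  shows "polite A I (ostar ` B)"
  unfolding polite_def
proof (intro conjI allI ballI)
  show "is_basis_of (Ocar A I) (ostar ` B)" using is_basis_of_ostar[OF politeD(1)[OF pol]] .
  show "weight_vector b" if "b \<in> ostar ` B" for b
    using that politeD(2)[OF pol] weight_vector_ostar by blast
  show "opow (zeta i) n \<in> ostar ` B" if "i \<in> I" for i n
    using politeD(3)[OF pol] that ostar_opow_zeta by (metis image_eqI)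
  fix \<theta> :: "'a \<Rightarrow> real"
  have Gam: "Gam \<theta> I = mirror_grade ` Gam (- \<theta>) I"
    using Gam_uminus[of "- \<theta>" I] by simp
  have F1: "F1 A I \<theta> (mirror_grade \<beta>) = ostar ` F2 A I (- \<theta>) \<beta>"
    and F2: "F2 A I \<theta> (mirror_grade \<beta>) = ostar ` F1 A I (- \<theta>) \<beta>"
    and F1lt: "F1lt A I \<theta> (mirror_grade \<beta>) = ostar ` F2lt A I (- \<theta>) \<beta>"
    and F2lt: "F2lt A I \<theta> (mirror_grade \<beta>) = ostar ` F1lt A I (- \<theta>) \<beta>" for \<beta>
    by (simp_all add: ostar_image_F1 ostar_image_F2 ostar_image_F1lt ostar_image_F2lt)
  have Dbar1: "Dbar1 \<theta> (mirror_grade \<beta>) (ostar b) = flip_tensor (Dbar2 (- \<theta>) \<beta> b)"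
    and Dbar2: "Dbar2 \<theta> (mirror_grade \<beta>) (ostar b) = flip_tensor (Dbar1 (- \<theta>) \<beta> b)" for \<beta> b
    using Dbar1_uminus_ostar[of "- \<theta>"] Dbar2_uminus_ostar[of "- \<theta>"] by simp_all
  show "F1 A I \<theta> \<gamma> = lin_span (ostar ` B \<inter> F1 A I \<theta> \<gamma>)"
    and "F2 A I \<theta> \<gamma> = lin_span (ostar ` B \<inter> F2 A I \<theta> \<gamma>)" if "\<gamma> \<in> Gam \<theta> I" for \<gamma>
  proof -
    from that obtain \<beta> where \<beta>: "\<gamma> = mirror_grade \<beta>" "\<beta> \<in> Gam (- \<theta>) I"
      unfolding Gam by (rule imageE)
    have "F2 A I (- \<theta>) \<beta> = lin_span (B \<inter> F2 A I (- \<theta>) \<beta>)"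
      using bspec[OF politeD(6)[OF pol, of "- \<theta>"] \<beta>(2)] .
    then show "F1 A I \<theta> \<gamma> = lin_span (ostar ` B \<inter> F1 A I \<theta> \<gamma>)"
      unfolding \<beta>(1) F1 by (rule span_condition_ostar)
    have "F1 A I (- \<theta>) \<beta> = lin_span (B \<inter> F1 A I (- \<theta>) \<beta>)"
      using bspec[OF politeD(4)[OF pol, of "- \<theta>"] \<beta>(2)] .
    then show "F2 A I \<theta> \<gamma> = lin_span (ostar ` B \<inter> F2 A I \<theta> \<gamma>)"
      unfolding \<beta>(1) F2 by (rule span_condition_ostar)
  qed
  show "{Dbar1 \<theta> \<alpha> b | \<alpha> b. \<alpha> \<in> Gam \<theta> I \<and> b \<in> ostar ` B \<and> b \<in> F1 A I \<theta> \<alpha> \<and> b \<notin> F1lt A I \<theta> \<alpha>}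
      = {otensor b\<^sub>1 b\<^sub>2 | b\<^sub>1 b\<^sub>2. b\<^sub>1 \<in> ostar ` B \<inter> Ogt0 A I \<theta> \<and> b\<^sub>2 \<in> ostar ` B \<inter> Ole0 A I \<theta>}"
    by (rule factorisation_condition_ostar[OF politeD(7)[OF pol, of "- \<theta>"] Gam F1 F1lt Dbar1])
      (simp_all add: ostar_image_Olt0 ostar_image_Oge0)
  show "{Dbar2 \<theta> \<beta> b | \<beta> b. \<beta> \<in> Gam \<theta> I \<and> b \<in> ostar ` B \<and> b \<in> F2 A I \<theta> \<beta> \<and> b \<notin> F2lt A I \<theta> \<beta>}
      = {otensor b\<^sub>1 b\<^sub>2 | b\<^sub>1 b\<^sub>2. b\<^sub>1 \<in> ostar ` B \<inter> Oge0 A I \<theta> \<and> b\<^sub>2 \<in> ostar ` B \<inter> Olt0 A I \<theta>}"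
    by (rule factorisation_condition_ostar[OF politeD(5)[OF pol, of "- \<theta>"] Gam F2 F2lt Dbar2])
      (simp_all add: ostar_image_Ogt0 ostar_image_Ole0)
qed

theorem proposition3p9:
  fixes A :: "'i \<Rightarrow> 'i \<Rightarrow> int" and I :: "'i set" and B :: "('i list \<Rightarrow> 'k::field_char_0) set"
  assumes "finite I" and "cartan_finite_type A I" and "polite A I B"
  shows "biperfect A I B"
  unfolding biperfect_def
  using polite_imp_perfect[OF assms(3)] polite_imp_perfect[OF polite_ostar[OF assms(3)]] by blast

end
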